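(* Let $t\ge0$ and define the operator $K^t_{\mathbb H}:=C_{\mathbb H}^{-1}C^t_{\mathbb H}$ in $\mathbb H$ on its natural domain $\operatorname{dom}K^t_{\mathbb H}=\{\psi\in\mathbb H: C^t_{\mathbb H}\psi\in\operatorname{ran}C_{\mathbb H}\}$. Then $$ \operatorname{dom}K^t_{\mathbb H}=\{\psi\in\mathbb H:K^t\psi\in\mathbb H\}, $$ and $K^t_{\mathbb H}$ is a closed operator in $\mathbb H$.
   Context: Let $\mathcal X\subset\mathbb R^d$ and consider the SDE $dX_t=b(X_t)\,dt+\sigma(X_t)\,dW_t$ ($W_t$ $d$-dimensional Brownian motion, $b,\sigma$ Lipschitz with $(1+\|x\|_2)^{-1}(\|b(x)\|_2+\|\sigma(x)\|_F)$ bounded), with transition kernel $\rho_t$ and invariant Borel probability measure $\mu$. Koopman operator $(K^t\psi)(x)=\int\psi(y)\rho_t(x,dy)$, a contraction on $L^2_\mu(\mathcal X)$. Let $k$ be a continuous symmetric positive definite kernel with RKHS $\mathbb H$, $\Phi(x)=k(x,\cdot)$, $\varphi(x)=k(x,x)$, satisfying (A1) $\varphi\in L^2_\mu$; (A2) $\psi\in L^2_\mu$ with $\iint k(x,y)\psi(x)\psi(y)d\mu d\mu=0$ implies $\psi=0$; (A3) $\psi\in\mathbb H$ with $\psi=0$ $\mu$-a.e. implies $\psi\equiv0$. Then $\mathbb H$ is a subspace of $L^2_\mu$. Let $\mathcal E:L^2_\mu\to\mathbb H$, $\mathcal E\psi=\int\psi(x)\Phi(x)\,d\mu(x)$, whose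 adjoint $\mathcal E^*$ is the inclusion $\mathbb H\hookrightarrow L^2_\mu$; $C_{\mathbb H}=\mathcal E\mathcal E^*$ (injective) and $C^t_{\mathbb H}=\mathcal EK^t\mathcal E^*$. *)

theory Defs
  imports "HOL-Probability.Probability"
begin

text \<open>A finite kernel combination sum_i a_i k(x_i, .) is represented by the list of
  pairs (a_i, x_i).\<close>

definition comb_fun :: "('a \<Rightarrow> 'a \<Rightarrow> real) \<Rightarrow> (real \<times> 'a) list \<Rightarrow> 'a \<Rightarrow> real" where
  "comb_fun k cs = (\<lambda>y. \<Sum>(a, x)\<leftarrow>cs. a * k x y)"

definition comb_sqnorm :: "('a \<Rightarrow> 'a \<Rightarrow> real) \<Rightarrow> (real \<times> 'a) list \<Rightarrow> real" where
  "comb_sqnorm k cs = (\<Sum>(a, x)\<leftarrow>cs. \<Sum>(b, z)\<leftarrow>cs. a * b * k x z)"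

definition comb_diff :: "(real \<times> 'a) list \<Rightarrow> (real \<times> 'a) list \<Rightarrow> (real \<times> 'a) list" where
  "comb_diff cs ds = cs @ map (\<lambda>(a, x). (- a, x)) ds"

definition pd_kernel :: "'a::topological_space set \<Rightarrow> ('a \<Rightarrow> 'a \<Rightarrow> real) \<Rightarrow> bool" where
  "pd_kernel X k \<longleftrightarrow>
     continuous_on (X \<times> X) (\<lambda>(x, y). k x y) \<and>
     (\<forall>x\<in>X. \<forall>y\<in>X. k x y = k y x) \<and>
     (\<forall>cs. set (map snd cs) \<subseteq> X \<longrightarrow> comb_sqnorm k cs \<ge> 0)"

text \<open>F is a Cauchy sequence (in RKHS norm) of finite combinations converging pointwise
  on X to f: the completion of the pre-Hilbert space span{k(x,.)} realised as functions.\<close>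
definition rkhs_approx ::
    "'a set \<Rightarrow> ('a \<Rightarrow> 'a \<Rightarrow> real) \<Rightarrow> (nat \<Rightarrow> (real \<times> 'a) list) \<Rightarrow> ('a \<Rightarrow> real) \<Rightarrow> bool" where
  "rkhs_approx X k F f \<longleftrightarrow>
     (\<forall>n. set (map snd (F n)) \<subseteq> X) \<and>
     (\<forall>e>0. \<exists>N. \<forall>m\<ge>N. \<forall>n\<ge>N. comb_sqnorm k (comb_diff (F m) (F n)) < e) \<and>
     (\<forall>y\<in>X. (\<lambda>n. comb_fun k (F n) y) \<longlonglongrightarrow> f y)"

text \<open>The RKHS H of k on X (functions are only relevant on X).\<close>
definition rkhs :: "'a set \<Rightarrow> ('a \<Rightarrow> 'a \<Rightarrow> real) \<Rightarrow> ('a \<Rightarrow> real) set" where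
  "rkhs X k = {f. \<exists>F. rkhs_approx X k F f}"

definition rkhs_norm :: "'a set \<Rightarrow> ('a \<Rightarrow> 'a \<Rightarrow> real) \<Rightarrow> ('a \<Rightarrow> real) \<Rightarrow> real" where
  "rkhs_norm X k f =
     (THE r. \<exists>F. rkhs_approx X k F f \<and> (\<lambda>n. sqrt (comb_sqnorm k (F n))) \<longlonglongrightarrow> r)"

definition square_integrable :: "'a measure \<Rightarrow> ('a \<Rightarrow> real) \<Rightarrow> bool" where
  "square_integrable M f \<longleftrightarrow> f \<in> borel_measurable M \<and> integrable M (\<lambda>x. (f x)\<^sup>2)"

definition koopman :: "('a \<Rightarrow> 'a measure) \<Rightarrow> ('a \<Rightarrow> real) \<Rightarrow> 'a \<Rightarrow> real" where
  "koopman \<rho> \<psi> = (\<lambda>x. \<integral>y. \<psi> y \<partial>(\<rho> x))"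

text \<open>The operator E : L^2_mu -> H, evaluated pointwise (reproducing property):
  (E psi)(y) = int psi(x) k(x,y) dmu(x).  Then C_H = E E^* (E^* the inclusion) and
  C^t_H = E K^t E^*.\<close>
definition kme :: "'a measure \<Rightarrow> ('a \<Rightarrow> 'a \<Rightarrow> real) \<Rightarrow> ('a \<Rightarrow> real) \<Rightarrow> 'a \<Rightarrow> real" where
  "kme \<mu> k \<psi> = (\<lambda>y. \<integral>x. \<psi> x * k x y \<partial>\<mu>)"

text \<open>Graph of K^t_H = C_H^{-1} C^t_H: pairs (psi, phi) in H x H with C_H phi = C^t_H psi.\<close>
definition koopH_graph ::
    "'a measure \<Rightarrow> 'a set \<Rightarrow> ('a \<Rightarrow> 'a \<Rightarrow> real) \<Rightarrow> ('a \<Rightarrow> 'a measure) \<Rightarrow> (('a \<Rightarrow> real) \<times> ('a \<Rightarrow> real)) set" where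
  "koopH_graph \<mu> X k \<rho> =
     {(\<psi>, \<phi>). \<psi> \<in> rkhs X k \<and> \<phi> \<in> rkhs X k \<and>
        (\<forall>y\<in>X. kme \<mu> k \<phi> y = kme \<mu> k (koopman \<rho> \<psi>) y)}"

text \<open>G is the graph of a (single-valued) closed operator in H: elements of H are
  identified when they agree on X; closedness w.r.t. the RKHS norm, via sequences.\<close>
definition rkhs_closed_operator ::
    "'a set \<Rightarrow> ('a \<Rightarrow> 'a \<Rightarrow> real) \<Rightarrow> (('a \<Rightarrow> real) \<times> ('a \<Rightarrow> real)) set \<Rightarrow> bool" where
  "rkhs_closed_operator X k G \<longleftrightarrow>
     G \<subseteq> rkhs X k \<times> rkhs X k \<and>
     (\<forall>\<psi> \<phi>1 \<phi>2. (\<psi>, \<phi>1) \<in> G \<longrightarrow> (\<psi>, \<phi>2) \<in> G \<longrightarrow> (\<forall>x\<in>X. \<phi>1 x = \<phi>2 x)) \<and>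
     (\<forall>\<psi>s \<phi>s \<psi> \<phi>. (\<forall>n. (\<psi>s n, \<phi>s n) \<in> G) \<longrightarrow> \<psi> \<in> rkhs X k \<longrightarrow> \<phi> \<in> rkhs X k \<longrightarrow>
        (\<lambda>n. rkhs_norm X k (\<lambda>x. \<psi>s n x - \<psi> x)) \<longlonglongrightarrow> 0 \<longrightarrow>
        (\<lambda>n. rkhs_norm X k (\<lambda>x. \<phi>s n x - \<phi> x)) \<longlonglongrightarrow> 0 \<longrightarrow>
        (\<psi>, \<phi>) \<in> G)"

end

theory Submission
  imports Defs
begin

(* Every f in H satisfies |f x| <= ||f|| sqrt (k x x), so by (A1) H embeds continuously into
   L^2(mu); the Koopman operator is an L^2-contraction (Jensen for each rho_t(x, .), then
   invariance of mu); and the kernel mean embedding E is continuous from L^2(mu) to pointwise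
   convergence on X and, by (A2), injective.  Hence E phi = E (K^t psi) holds iff K^t psi = phi
   mu-a.e., which is the description of the domain.  Closedness follows by passing to the limit
   in E phi_n = E (K^t psi_n), and single-valuedness (in H) from (A3). *)

section \<open>Finite kernel combinations\<close>

definition comb_inner :: "('a \<Rightarrow> 'a \<Rightarrow> real) \<Rightarrow> (real \<times> 'a) list \<Rightarrow> (real \<times> 'a) list \<Rightarrow> real" where
  "comb_inner k cs ds = (\<Sum>(a, x)\<leftarrow>cs. \<Sum>(b, z)\<leftarrow>ds. a * b * k x z)"

definition comb_scale :: "real \<Rightarrow> (real \<times> 'a) list \<Rightarrow> (real \<times> 'a) list" where
  "comb_scale c cs = map (\<lambda>(a, x). (c * a, x)) cs"

lemma comb_inner_eq_sum_comb_fun: "comb_inner k cs ds = (\<Sum>(b, z)\<leftarrow>ds. b * comb_fun k cs z)"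
proof -
  have "comb_inner k cs ds = (\<Sum>(a, x)\<leftarrow>cs. \<Sum>(b, z)\<leftarrow>ds. b * (a * k x z))"
    unfolding comb_inner_def by (simp add: algebra_simps)
  also have "\<dots> = (\<Sum>(b, z)\<leftarrow>ds. \<Sum>(a, x)\<leftarrow>cs. b * (a * k x z))"
    by (induction cs) (auto simp: sum_list_addf case_prod_beta)
  also have "\<dots> = (\<Sum>(b, z)\<leftarrow>ds. b * comb_fun k cs z)"
    unfolding comb_fun_def by (simp add: case_prod_unfold sum_list_const_mult)
  finally show ?thesis .
qed

lemma comb_fun_append: "comb_fun k (cs @ ds) y = comb_fun k cs y + comb_fun k ds y"
  unfolding comb_fun_def by simp

lemma comb_fun_scale: "comb_fun k (comb_scale c cs) y = c * comb_fun k cs y"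
  unfolding comb_fun_def comb_scale_def
  by (simp add: case_prod_unfold o_def sum_list_const_mult[symmetric] algebra_simps)

lemma comb_diff_eq_append_scale: "comb_diff cs ds = cs @ comb_scale (-1) ds"
  unfolding comb_diff_def comb_scale_def by auto

lemma comb_fun_diff: "comb_fun k (comb_diff cs ds) y = comb_fun k cs y - comb_fun k ds y"
  by (simp add: comb_diff_eq_append_scale comb_fun_append comb_fun_scale)

lemma comb_inner_append_left: "comb_inner k (cs @ ds) es = comb_inner k cs es + comb_inner k ds es"
  unfolding comb_inner_def by simp

lemma comb_inner_scale_left: "comb_inner k (comb_scale c cs) es = c * comb_inner k cs es"
  unfolding comb_inner_eq_sum_comb_fun
  by (simp add: comb_fun_scale case_prod_unfold sum_list_const_mult[symmetric] algebra_simps)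

lemma comb_sqnorm_eq_comb_inner: "comb_sqnorm k cs = comb_inner k cs cs"
  unfolding comb_sqnorm_def comb_inner_def by simp

lemma image_snd_comb_scale [simp]: "snd ` set (comb_scale c cs) = snd ` set cs"
  unfolding comb_scale_def by (induction cs) auto

lemma image_snd_comb_diff [simp]: "snd ` set (comb_diff cs ds) = snd ` set cs \<union> snd ` set ds"
  unfolding comb_diff_eq_append_scale by (simp add: image_Un)

lemma nonneg_quadratic_discriminant:
  fixes a b c :: real
  assumes nonneg: "\<And>s. 0 \<le> a + 2 * b * s + c * s\<^sup>2" and "c \<ge> 0"
  shows "b\<^sup>2 \<le> a * c"
proof (cases "c = 0")
  case True
  show ?thesis
  proof (rule ccontr)
    assume "\<not> ?thesis"
    then have "b \<noteq> 0" using True by auto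
    have "0 \<le> a + 2 * b * (- (a + 1) / (2 * b))" using nonneg[of "- (a + 1) / (2 * b)"] True by simp
    also have "\<dots> = -1" using \<open>b \<noteq> 0\<close> by (simp add: field_simps)
    finally show False by simp
  qed
next
  case False
  then have c: "c > 0" using \<open>c \<ge> 0\<close> by auto
  have "0 \<le> a + 2 * b * (- b / c) + c * (- b / c)\<^sup>2" by (rule nonneg)
  also have "\<dots> = a - b\<^sup>2 / c" using c by (simp add: field_simps power2_eq_square)
  finally show ?thesis using c by (simp add: field_simps)
qed

lemma eventually_small_iff_sqrt:
  fixes a :: "nat \<Rightarrow> nat \<Rightarrow> real"
  shows "(\<forall>e>0. \<exists>N. \<forall>m\<ge>N. \<forall>n\<ge>N. a m n < e) \<longleftrightarrow> (\<forall>e>0. \<exists>N. \<forall>m\<ge>N. \<forall>n\<ge>N. sqrt (a m n) < e)"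
proof (intro iffI allI impI)
  fix e :: real assume "e > 0" and "\<forall>e>0. \<exists>N. \<forall>m\<ge>N. \<forall>n\<ge>N. a m n < e"
  then obtain N where "\<forall>m\<ge>N. \<forall>n\<ge>N. a m n < e\<^sup>2" by (meson zero_less_power)
  then show "\<exists>N. \<forall>m\<ge>N. \<forall>n\<ge>N. sqrt (a m n) < e"
    using \<open>e > 0\<close> by (metis real_sqrt_less_mono real_sqrt_abs abs_of_pos)
next
  fix e :: real assume "e > 0" and "\<forall>e>0. \<exists>N. \<forall>m\<ge>N. \<forall>n\<ge>N. sqrt (a m n) < e"
  then obtain N where "\<forall>m\<ge>N. \<forall>n\<ge>N. sqrt (a m n) < sqrt e" by (meson real_sqrt_gt_zero)
  then show "\<exists>N. \<forall>m\<ge>N. \<forall>n\<ge>N. a m n < e" by auto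
qed

section \<open>The reproducing kernel Hilbert space\<close>

locale rkhs_kernel =
  fixes X :: "'a::topological_space set" and k :: "'a \<Rightarrow> 'a \<Rightarrow> real"
  assumes pd: "pd_kernel X k"
begin

lemma kernel_sym: "x \<in> X \<Longrightarrow> y \<in> X \<Longrightarrow> k x y = k y x"
  using pd unfolding pd_kernel_def by auto

lemma comb_inner_self_nonneg: "snd ` set cs \<subseteq> X \<Longrightarrow> comb_inner k cs cs \<ge> 0"
  using pd unfolding pd_kernel_def comb_sqnorm_eq_comb_inner by auto

lemma kernel_diag_nonneg: "y \<in> X \<Longrightarrow> k y y \<ge> 0"
  using comb_inner_self_nonneg[of "[(1, y)]"] by (simp add: comb_inner_def)

lemma comb_inner_commute:
  assumes "snd ` set cs \<subseteq> X" "snd ` set ds \<subseteq> X"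
  shows "comb_inner k cs ds = comb_inner k ds cs"
  using assms(1)
proof (induction cs)
  case Nil
  then show ?case by (simp add: comb_inner_def case_prod_unfold)
next
  case (Cons c cs)
  obtain a x where c: "c = (a, x)" by force
  have x: "x \<in> X" using Cons.prems c by auto
  have "(\<Sum>p\<leftarrow>ds. fst p * a * k (snd p) x) = (\<Sum>p\<leftarrow>ds. a * fst p * k x (snd p))"
    using assms(2) x by (intro arg_cong[where f=sum_list] map_cong) (auto simp: kernel_sym)
  then show ?case using Cons unfolding comb_inner_def c by (simp add: case_prod_unfold sum_list_addf)
qed

lemma comb_inner_append_right:
  assumes "snd ` set cs \<subseteq> X" "snd ` set ds \<subseteq> X" "snd ` set es \<subseteq> X"
  shows "comb_inner k cs (ds @ es) = comb_inner k cs ds + comb_inner k cs es"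
proof -
  have "comb_inner k cs (ds @ es) = comb_inner k ds cs + comb_inner k es cs"
    using assms comb_inner_commute[of cs "ds @ es"] by (simp add: image_Un comb_inner_append_left)
  then show ?thesis using assms by (simp add: comb_inner_commute[of cs])
qed

lemma comb_inner_scale_right:
  assumes "snd ` set cs \<subseteq> X" "snd ` set ds \<subseteq> X"
  shows "comb_inner k cs (comb_scale c ds) = c * comb_inner k cs ds"
  using assms by (simp add: comb_inner_commute[of cs] comb_inner_scale_left)

lemma comb_inner_cong_left:
  assumes "snd ` set ds \<subseteq> X" "\<And>y. y \<in> X \<Longrightarrow> comb_fun k cs y = comb_fun k cs' y"
  shows "comb_inner k cs ds = comb_inner k cs' ds"
  unfolding comb_inner_eq_sum_comb_fun using assms by (intro arg_cong[where f=sum_list] map_cong) auto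

lemma comb_inner_Cauchy_Schwarz:
  assumes "snd ` set cs \<subseteq> X" "snd ` set ds \<subseteq> X"
  shows "(comb_inner k cs ds)\<^sup>2 \<le> comb_inner k cs cs * comb_inner k ds ds"
proof (rule nonneg_quadratic_discriminant)
  fix s
  have "0 \<le> comb_inner k (cs @ comb_scale s ds) (cs @ comb_scale s ds)"
    using assms by (intro comb_inner_self_nonneg) (simp add: image_Un)
  also have "\<dots> = comb_inner k cs cs + 2 * comb_inner k cs ds * s + comb_inner k ds ds * s\<^sup>2"
    using assms by (simp add: comb_inner_append_left comb_inner_append_right comb_inner_scale_left
        comb_inner_scale_right comb_inner_commute[of ds cs] power2_eq_square algebra_simps)
  finally show "0 \<le> comb_inner k cs cs + 2 * comb_inner k cs ds * s + comb_inner k ds ds * s\<^sup>2" .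
  show "comb_inner k ds ds \<ge> 0" using comb_inner_self_nonneg[OF assms(2)] .
qed

text \<open>The absolute value only matters for combinations with centres outside X.\<close>
definition comb_norm :: "(real \<times> 'a) list \<Rightarrow> real" where
  "comb_norm cs = sqrt \<bar>comb_inner k cs cs\<bar>"

lemma comb_norm_nonneg: "comb_norm cs \<ge> 0"
  unfolding comb_norm_def by simp

lemma comb_norm_square: "snd ` set cs \<subseteq> X \<Longrightarrow> (comb_norm cs)\<^sup>2 = comb_inner k cs cs"
  unfolding comb_norm_def using comb_inner_self_nonneg by simp

lemma sqrt_comb_sqnorm: "snd ` set cs \<subseteq> X \<Longrightarrow> sqrt (comb_sqnorm k cs) = comb_norm cs"
  unfolding comb_norm_def comb_sqnorm_eq_comb_inner using comb_inner_self_nonneg by simp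

lemma comb_inner_abs_le:
  assumes "snd ` set cs \<subseteq> X" "snd ` set ds \<subseteq> X"
  shows "\<bar>comb_inner k cs ds\<bar> \<le> comb_norm cs * comb_norm ds"
proof -
  have "\<bar>comb_inner k cs ds\<bar>\<^sup>2 \<le> (comb_norm cs * comb_norm ds)\<^sup>2"
    using comb_inner_Cauchy_Schwarz[OF assms] comb_norm_square assms by (simp add: power_mult_distrib)
  then show ?thesis using comb_norm_nonneg by (meson power2_le_imp_le mult_nonneg_nonneg)
qed

lemma kernel_abs_le: "x \<in> X \<Longrightarrow> y \<in> X \<Longrightarrow> \<bar>k x y\<bar> \<le> sqrt (k x x) * sqrt (k y y)"
  using comb_inner_abs_le[of "[(1, x)]" "[(1, y)]"] kernel_diag_nonneg
  by (simp add: comb_inner_def comb_norm_def)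

lemma comb_norm_append_le:
  assumes "snd ` set cs \<subseteq> X" "snd ` set ds \<subseteq> X"
  shows "comb_norm (cs @ ds) \<le> comb_norm cs + comb_norm ds"
proof -
  have "(comb_norm (cs @ ds))\<^sup>2 = comb_inner k cs cs + 2 * comb_inner k cs ds + comb_inner k ds ds"
    using assms comb_norm_square[of "cs @ ds"]
    by (simp add: image_Un comb_inner_append_left comb_inner_append_right comb_inner_commute[of ds cs])
  also have "\<dots> \<le> (comb_norm cs)\<^sup>2 + 2 * (comb_norm cs * comb_norm ds) + (comb_norm ds)\<^sup>2"
    using comb_inner_abs_le[OF assms] assms comb_norm_square by simp
  also have "\<dots> = (comb_norm cs + comb_norm ds)\<^sup>2" by (simp add: power2_eq_square algebra_simps)
  finally show ?thesis using comb_norm_nonneg by (meson add_nonneg_nonneg power2_le_imp_le)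
qed

lemma comb_norm_scale: "snd ` set cs \<subseteq> X \<Longrightarrow> comb_norm (comb_scale c cs) = \<bar>c\<bar> * comb_norm cs"
  unfolding comb_norm_def
  by (simp add: comb_inner_scale_left comb_inner_scale_right power2_eq_square real_sqrt_mult abs_mult)

lemma comb_norm_cong:
  assumes "snd ` set cs \<subseteq> X" "snd ` set cs' \<subseteq> X"
    and "\<And>y. y \<in> X \<Longrightarrow> comb_fun k cs y = comb_fun k cs' y"
  shows "comb_norm cs = comb_norm cs'"
  using assms comb_inner_cong_left[of cs cs cs'] comb_inner_cong_left[of cs' cs cs']
    comb_inner_commute[of cs cs']
  by (simp add: comb_norm_def)

lemma comb_norm_diff_le:
  assumes "snd ` set cs \<subseteq> X" "snd ` set ds \<subseteq> X"
  shows "comb_norm (comb_diff cs ds) \<le> comb_norm cs + comb_norm ds"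
  using comb_norm_append_le[of cs "comb_scale (-1) ds"] assms comb_norm_scale[of ds "-1"]
  by (simp add: comb_diff_eq_append_scale)

lemma comb_norm_reverse_triangle:
  assumes cs: "snd ` set cs \<subseteq> X" and ds: "snd ` set ds \<subseteq> X"
  shows "\<bar>comb_norm cs - comb_norm ds\<bar> \<le> comb_norm (comb_diff cs ds)"
proof -
  have "comb_norm cs = comb_norm (comb_diff cs ds @ ds)"
    using assms by (intro comb_norm_cong) (simp_all add: image_Un comb_fun_append comb_fun_diff)
  also have "\<dots> \<le> comb_norm (comb_diff cs ds) + comb_norm ds"
    using assms by (intro comb_norm_append_le) (simp_all add: image_Un)
  finally have "comb_norm cs \<le> comb_norm (comb_diff cs ds) + comb_norm ds" .
  moreover have "comb_norm ds \<le> comb_norm (comb_diff cs ds) + comb_norm cs"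
  proof -
    have "comb_norm ds = comb_norm (comb_scale (-1) (comb_diff cs ds) @ cs)"
      using assms by (intro comb_norm_cong) (simp_all add: image_Un comb_fun_append comb_fun_diff comb_fun_scale)
    also have "\<dots> \<le> comb_norm (comb_scale (-1) (comb_diff cs ds)) + comb_norm cs"
      using assms by (intro comb_norm_append_le) (simp_all add: image_Un)
    also have "comb_norm (comb_scale (-1) (comb_diff cs ds)) = comb_norm (comb_diff cs ds)"
      using assms by (subst comb_norm_scale) simp_all
    finally show ?thesis .
  qed
  ultimately show ?thesis by linarith
qed

lemma rkhs_approx_iff:
  "rkhs_approx X k F f \<longleftrightarrow>
     (\<forall>n. snd ` set (F n) \<subseteq> X) \<and>
     (\<forall>e>0. \<exists>N. \<forall>m\<ge>N. \<forall>n\<ge>N. comb_norm (comb_diff (F m) (F n)) < e) \<and>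
     (\<forall>y\<in>X. (\<lambda>n. comb_fun k (F n) y) \<longlonglongrightarrow> f y)"
proof -
  have "comb_norm (comb_diff (F m) (F n)) = sqrt (comb_sqnorm k (comb_diff (F m) (F n)))"
    if "\<forall>n. snd ` set (F n) \<subseteq> X" for m n
    using that by (simp add: sqrt_comb_sqnorm)
  then show ?thesis
    unfolding rkhs_approx_def eventually_small_iff_sqrt[where a="\<lambda>m n. comb_sqnorm k (comb_diff (F m) (F n))"]
    by auto
qed

lemma rkhs_approxD:
  assumes "rkhs_approx X k F f"
  shows rkhs_approx_supp: "snd ` set (F n) \<subseteq> X"
    and rkhs_approx_Cauchy: "e > 0 \<Longrightarrow> \<exists>N. \<forall>m\<ge>N. \<forall>n\<ge>N. comb_norm (comb_diff (F m) (F n)) < e"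
    and rkhs_approx_tendsto: "y \<in> X \<Longrightarrow> (\<lambda>n. comb_fun k (F n) y) \<longlonglongrightarrow> f y"
  using assms unfolding rkhs_approx_iff by blast+

lemma convergent_comb_norm:
  assumes "rkhs_approx X k F f"
  shows "convergent (\<lambda>n. comb_norm (F n))"
proof -
  have "Cauchy (\<lambda>n. comb_norm (F n))"
  proof (rule metric_CauchyI)
    fix e :: real assume "e > 0"
    then obtain N where N: "\<forall>m\<ge>N. \<forall>n\<ge>N. comb_norm (comb_diff (F m) (F n)) < e"
      using rkhs_approx_Cauchy[OF assms] by blast
    have "\<forall>m\<ge>N. \<forall>n\<ge>N. dist (comb_norm (F m)) (comb_norm (F n)) < e"
      using N comb_norm_reverse_triangle[OF rkhs_approx_supp[OF assms] rkhs_approx_supp[OF assms]]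
      unfolding dist_real_def by (meson le_less_trans)
    then show "\<exists>M. \<forall>m\<ge>M. \<forall>n\<ge>M. dist (comb_norm (F m)) (comb_norm (F n)) < e" by blast
  qed
  then show ?thesis by (simp add: Cauchy_convergent_iff)
qed

lemma comb_inner_tendsto_zero:
  assumes F: "rkhs_approx X k F f" and f: "\<And>y. y \<in> X \<Longrightarrow> f y = 0"
    and cs: "snd ` set cs \<subseteq> X"
  shows "(\<lambda>n. comb_inner k cs (F n)) \<longlonglongrightarrow> 0"
proof -
  have "comb_inner k cs (F n) = (\<Sum>(a, x)\<leftarrow>cs. a * comb_fun k (F n) x)" for n
    using rkhs_approx_supp[OF F] cs
    by (subst comb_inner_commute) (auto simp: comb_inner_eq_sum_comb_fun)
  moreover have "(\<lambda>n. \<Sum>(a, x)\<leftarrow>cs. a * comb_fun k (F n) x) \<longlonglongrightarrow> 0"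
    using cs
  proof (induction cs)
    case (Cons c cs)
    then have "(\<lambda>n. comb_fun k (F n) (snd c)) \<longlonglongrightarrow> 0"
      using rkhs_approx_tendsto[OF F] f by simp
    then show ?case using Cons by (auto simp: case_prod_unfold intro!: tendsto_add_zero tendsto_mult_right_zero)
  qed simp
  ultimately show ?thesis by simp
qed

text \<open>Split F n = (F n - F N) + F N: the first summand is uniformly small by the Cauchy
  property, the second is handled by the previous lemma.\<close>
lemma comb_norm_tendsto_zero:
  assumes F: "rkhs_approx X k F f" and f: "\<And>y. y \<in> X \<Longrightarrow> f y = 0"
  shows "(\<lambda>n. comb_norm (F n)) \<longlonglongrightarrow> 0"
proof -
  note supp = rkhs_approx_supp[OF F]
  obtain B where B: "B > 0" "\<And>n. comb_norm (F n) \<le> B"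
    using convergent_imp_Bseq[OF convergent_comb_norm[OF F]] by (metis BseqE abs_le_D1 real_norm_def)
  have "(\<lambda>n. comb_inner k (F n) (F n)) \<longlonglongrightarrow> 0"
  proof (rule LIMSEQ_I)
    fix r :: real assume "r > 0"
    then obtain N where N: "\<forall>m\<ge>N. \<forall>n\<ge>N. comb_norm (comb_diff (F m) (F n)) < r / (2 * B)"
      using rkhs_approx_Cauchy[OF F] B(1) by (meson divide_pos_pos zero_less_mult_iff zero_less_numeral)
    obtain n0 where n0: "\<forall>n\<ge>n0. \<bar>comb_inner k (F N) (F n)\<bar> < r / 2"
      using LIMSEQ_D[OF comb_inner_tendsto_zero[OF F f supp], of "r / 2"] \<open>r > 0\<close> by auto
    have "\<bar>comb_inner k (F n) (F n)\<bar> < r" if n: "n \<ge> max N n0" for n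
    proof -
      have "comb_inner k (F n) (F n) = comb_inner k (comb_diff (F n) (F N) @ F N) (F n)"
        using supp by (intro comb_inner_cong_left) (auto simp: comb_fun_append comb_fun_diff)
      then have split: "comb_inner k (F n) (F n) = comb_inner k (comb_diff (F n) (F N)) (F n) + comb_inner k (F N) (F n)"
        by (simp add: comb_inner_append_left)
      have "\<bar>comb_inner k (comb_diff (F n) (F N)) (F n)\<bar> \<le> comb_norm (comb_diff (F n) (F N)) * comb_norm (F n)"
        using supp by (intro comb_inner_abs_le) (auto simp: image_Un)
      also have "\<dots> \<le> r / (2 * B) * B"
        using N n B comb_norm_nonneg \<open>r > 0\<close> by (intro mult_mono) (auto intro: less_imp_le)
      also have "\<dots> = r / 2" using B(1) by simp
      finally have "\<bar>comb_inner k (comb_diff (F n) (F N)) (F n)\<bar> \<le> r / 2" .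
      moreover have "\<bar>comb_inner k (F N) (F n)\<bar> < r / 2" using n0 n by simp
      ultimately show ?thesis unfolding split by linarith
    qed
    then show "\<exists>no. \<forall>n\<ge>no. norm (comb_inner k (F n) (F n) - 0) < r"
      by (intro exI[of _ "max N n0"]) simp
  qed
  then have "(\<lambda>n. sqrt \<bar>comb_inner k (F n) (F n)\<bar>) \<longlonglongrightarrow> sqrt \<bar>0\<bar>"
    by (intro tendsto_real_sqrt tendsto_rabs)
  then show ?thesis by (simp add: comb_norm_def)
qed

lemma rkhs_approx_diff:
  assumes F: "rkhs_approx X k F f" and G: "rkhs_approx X k G g"
  shows "rkhs_approx X k (\<lambda>n. comb_diff (F n) (G n)) (\<lambda>x. f x - g x)"
  unfolding rkhs_approx_iff
proof (intro conjI allI impI ballI)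
  note supp = rkhs_approx_supp[OF F] rkhs_approx_supp[OF G]
  then show "snd ` set (comb_diff (F n) (G n)) \<subseteq> X" for n by simp
  show "(\<lambda>n. comb_fun k (comb_diff (F n) (G n)) y) \<longlonglongrightarrow> f y - g y" if "y \<in> X" for y
    unfolding comb_fun_diff using rkhs_approx_tendsto[OF F that] rkhs_approx_tendsto[OF G that]
    by (rule tendsto_diff)
  fix e :: real assume "e > 0"
  then obtain N1 N2 where
    N1: "\<forall>m\<ge>N1. \<forall>n\<ge>N1. comb_norm (comb_diff (F m) (F n)) < e / 2" and
    N2: "\<forall>m\<ge>N2. \<forall>n\<ge>N2. comb_norm (comb_diff (G m) (G n)) < e / 2"
    using rkhs_approx_Cauchy[OF F, of "e / 2"] rkhs_approx_Cauchy[OF G, of "e / 2"] by auto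
  have "comb_norm (comb_diff (comb_diff (F m) (G m)) (comb_diff (F n) (G n))) < e"
    if mn: "m \<ge> max N1 N2" "n \<ge> max N1 N2" for m n
  proof -
    have "comb_norm (comb_diff (comb_diff (F m) (G m)) (comb_diff (F n) (G n)))
        = comb_norm (comb_diff (comb_diff (F m) (F n)) (comb_diff (G m) (G n)))"
      using supp by (intro comb_norm_cong) (simp_all add: comb_fun_diff)
    also have "\<dots> \<le> comb_norm (comb_diff (F m) (F n)) + comb_norm (comb_diff (G m) (G n))"
      using supp by (intro comb_norm_diff_le) simp_all
    also have "\<dots> < e / 2 + e / 2" using N1 N2 mn by (intro add_strict_mono) simp_all
    finally show ?thesis by simp
  qed
  then show "\<exists>N. \<forall>m\<ge>N. \<forall>n\<ge>N. comb_norm (comb_diff (comb_diff (F m) (G m)) (comb_diff (F n) (G n))) < e"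
    by (intro exI[of _ "max N1 N2"]) simp
qed

lemma rkhs_diff: "f \<in> rkhs X k \<Longrightarrow> g \<in> rkhs X k \<Longrightarrow> (\<lambda>x. f x - g x) \<in> rkhs X k"
  unfolding rkhs_def using rkhs_approx_diff by blast

lemma comb_norm_limit_unique:
  assumes F: "rkhs_approx X k F f" and G: "rkhs_approx X k G f"
    and a: "(\<lambda>n. comb_norm (F n)) \<longlonglongrightarrow> a" and b: "(\<lambda>n. comb_norm (G n)) \<longlonglongrightarrow> b"
  shows "a = b"
proof -
  have "(\<lambda>n. comb_norm (F n) - comb_norm (G n)) \<longlonglongrightarrow> 0"
  proof (rule Lim_null_comparison)
    show "\<forall>\<^sub>F n in sequentially. norm (comb_norm (F n) - comb_norm (G n)) \<le> comb_norm (comb_diff (F n) (G n))"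
      using comb_norm_reverse_triangle[OF rkhs_approx_supp[OF F] rkhs_approx_supp[OF G]] by simp
    show "(\<lambda>n. comb_norm (comb_diff (F n) (G n))) \<longlonglongrightarrow> 0"
      by (rule comb_norm_tendsto_zero[OF rkhs_approx_diff[OF F G]]) simp
  qed
  moreover have "(\<lambda>n. comb_norm (F n) - comb_norm (G n)) \<longlonglongrightarrow> a - b"
    using a b by (rule tendsto_diff)
  ultimately have "0 = a - b" by (rule LIMSEQ_unique)
  then show ?thesis by simp
qed

lemma comb_norm_tendsto_rkhs_norm:
  assumes F: "rkhs_approx X k F f"
  shows "(\<lambda>n. comb_norm (F n)) \<longlonglongrightarrow> rkhs_norm X k f"
proof -
  have sqrt_eq: "(\<lambda>n. sqrt (comb_sqnorm k (G n))) = (\<lambda>n. comb_norm (G n))" if "rkhs_approx X k G f" for G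
    using sqrt_comb_sqnorm[OF rkhs_approx_supp[OF that]] by simp
  obtain L where L: "(\<lambda>n. comb_norm (F n)) \<longlonglongrightarrow> L"
    using convergent_comb_norm[OF F] by (auto simp: convergent_def)
  have "rkhs_norm X k f = L"
    unfolding rkhs_norm_def
  proof (rule the_equality)
    show "\<exists>F. rkhs_approx X k F f \<and> (\<lambda>n. sqrt (comb_sqnorm k (F n))) \<longlonglongrightarrow> L"
      using F L sqrt_eq by auto
  next
    fix r assume "\<exists>G. rkhs_approx X k G f \<and> (\<lambda>n. sqrt (comb_sqnorm k (G n))) \<longlonglongrightarrow> r"
    then show "r = L" using comb_norm_limit_unique[OF _ F _ L] sqrt_eq by auto
  qed
  then show ?thesis using L by simp
qed

lemma rkhs_abs_le:
  assumes f: "f \<in> rkhs X k" and y: "y \<in> X"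
  shows "\<bar>f y\<bar> \<le> rkhs_norm X k f * sqrt (k y y)"
proof -
  obtain F where F: "rkhs_approx X k F f" using f unfolding rkhs_def by auto
  have "\<bar>comb_fun k (F n) y\<bar> \<le> comb_norm (F n) * sqrt (k y y)" for n
  proof -
    have "comb_fun k (F n) y = comb_inner k (F n) [(1, y)]" by (simp add: comb_inner_eq_sum_comb_fun)
    moreover have "comb_norm [(1, y)] = sqrt (k y y)"
      using kernel_diag_nonneg[OF y] by (simp add: comb_norm_def comb_inner_def)
    ultimately show ?thesis using comb_inner_abs_le[OF rkhs_approx_supp[OF F], of "[(1, y)]"] y by simp
  qed
  moreover have "(\<lambda>n. \<bar>comb_fun k (F n) y\<bar>) \<longlonglongrightarrow> \<bar>f y\<bar>"
    using rkhs_approx_tendsto[OF F y] by (rule tendsto_rabs)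
  moreover have "(\<lambda>n. comb_norm (F n) * sqrt (k y y)) \<longlonglongrightarrow> rkhs_norm X k f * sqrt (k y y)"
    using comb_norm_tendsto_rkhs_norm[OF F] by (rule tendsto_mult_right)
  ultimately show ?thesis by (intro LIMSEQ_le) auto
qed

end

section \<open>Square-integrable functions and stationary Markov kernels\<close>

lemma integrable_mult_square_integrable:
  assumes f: "square_integrable M f" and g: "square_integrable M g"
  shows "integrable M (\<lambda>x. f x * g x)"
proof (rule Bochner_Integration.integrable_bound)
  show "integrable M (\<lambda>x. (f x)\<^sup>2 + (g x)\<^sup>2)"
    using f g unfolding square_integrable_def by simp
  show "(\<lambda>x. f x * g x) \<in> borel_measurable M"
    using f g unfolding square_integrable_def by (intro borel_measurable_times) simp_all
  have "\<bar>a * b\<bar> \<le> a\<^sup>2 + b\<^sup>2" for a b :: real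
    unfolding abs_mult
    using sum_squares_bound[of "\<bar>a\<bar>" "\<bar>b\<bar>"] mult_nonneg_nonneg[OF abs_ge_zero abs_ge_zero, of a b]
      power2_abs[of a] power2_abs[of b]
    by linarith
  then show "AE x in M. norm (f x * g x) \<le> norm ((f x)\<^sup>2 + (g x)\<^sup>2)"
    by simp
qed

lemma square_integrable_diff:
  assumes f: "square_integrable M f" and g: "square_integrable M g"
  shows "square_integrable M (\<lambda>x. f x - g x)"
proof -
  have "integrable M (\<lambda>x. (f x)\<^sup>2 + (g x)\<^sup>2 - 2 * (f x * g x))"
    using assms integrable_mult_square_integrable[OF f g] unfolding square_integrable_def
    by (intro Bochner_Integration.integrable_diff Bochner_Integration.integrable_add integrable_mult_right) simp_all
  then show ?thesis
    using assms unfolding square_integrable_def power2_diff by (simp add: borel_measurable_diff mult.assoc)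
qed

lemma Cauchy_Schwarz_integral:
  assumes f: "square_integrable M f" and g: "square_integrable M g"
  shows "(\<integral>x. \<bar>f x * g x\<bar> \<partial>M) \<le> sqrt (\<integral>x. (f x)\<^sup>2 \<partial>M) * sqrt (\<integral>x. (g x)\<^sup>2 \<partial>M)"
proof -
  have f': "square_integrable M (\<lambda>x. \<bar>f x\<bar>)" and g': "square_integrable M (\<lambda>x. \<bar>g x\<bar>)"
    using f g unfolding square_integrable_def by (simp_all add: borel_measurable_abs)
  have fg: "integrable M (\<lambda>x. \<bar>f x * g x\<bar>)"
    using integrable_mult_square_integrable[OF f' g'] by (simp add: abs_mult)
  have "(\<integral>x. \<bar>f x * g x\<bar> \<partial>M)\<^sup>2 \<le> (\<integral>x. (f x)\<^sup>2 \<partial>M) * (\<integral>x. (g x)\<^sup>2 \<partial>M)"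
  proof (rule nonneg_quadratic_discriminant)
    fix s :: real
    have "0 \<le> (\<integral>x. (\<bar>f x\<bar> + s * \<bar>g x\<bar>)\<^sup>2 \<partial>M)" by simp
    also have "\<dots> = (\<integral>x. (f x)\<^sup>2 + 2 * s * \<bar>f x * g x\<bar> + s\<^sup>2 * (g x)\<^sup>2 \<partial>M)"
      by (simp add: power2_eq_square abs_mult algebra_simps)
    also have "\<dots> = (\<integral>x. (f x)\<^sup>2 \<partial>M) + 2 * (\<integral>x. \<bar>f x * g x\<bar> \<partial>M) * s + (\<integral>x. (g x)\<^sup>2 \<partial>M) * s\<^sup>2"
      using f g fg unfolding square_integrable_def by (simp add: algebra_simps)
    finally show "0 \<le> (\<integral>x. (f x)\<^sup>2 \<partial>M) + 2 * (\<integral>x. \<bar>f x * g x\<bar> \<partial>M) * s + (\<integral>x. (g x)\<^sup>2 \<partial>M) * s\<^sup>2" .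
  qed simp
  then show ?thesis by (simp add: real_le_rsqrt real_sqrt_mult[symmetric])
qed

locale stationary_markov_kernel =
  fixes \<mu> :: "'a measure" and R :: "'a \<Rightarrow> 'a measure"
  assumes prob_space_mu: "prob_space \<mu>"
    and kernel: "R \<in> \<mu> \<rightarrow>\<^sub>M prob_algebra \<mu>"
    and invariant: "\<And>A. A \<in> sets \<mu> \<Longrightarrow> (\<integral>\<^sup>+x. emeasure (R x) A \<partial>\<mu>) = emeasure \<mu> A"
begin

lemma kernel_subprob: "R \<in> \<mu> \<rightarrow>\<^sub>M subprob_algebra \<mu>"
  using kernel by (rule measurable_prob_algebraD)

lemma
  assumes "x \<in> space \<mu>"
  shows prob_space_kernel: "prob_space (R x)"
    and sets_kernel: "sets (R x) = sets \<mu>"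
  using measurable_space[OF kernel assms] by (auto simp: space_prob_algebra)

lemma measurable_kernel: "f \<in> borel_measurable \<mu> \<Longrightarrow> x \<in> space \<mu> \<Longrightarrow> f \<in> borel_measurable (R x)"
  using sets_kernel measurable_cong_sets by blast

lemma bind_kernel: "\<mu> \<bind> R = \<mu>"
proof (rule measure_eqI)
  have "space \<mu> \<noteq> {}" using prob_space.not_empty[OF prob_space_mu] .
  then show sets: "sets (\<mu> \<bind> R) = sets \<mu>"
    using sets_kernel by (intro sets_bind) auto
  fix A assume "A \<in> sets (\<mu> \<bind> R)"
  then show "emeasure (\<mu> \<bind> R) A = emeasure \<mu> A"
    using emeasure_bind[OF \<open>space \<mu> \<noteq> {}\<close> kernel_subprob] invariant sets by simp
qed

lemma nn_integral_kernel_invariant: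
  "f \<in> borel_measurable \<mu> \<Longrightarrow> (\<integral>\<^sup>+x. \<integral>\<^sup>+y. f y \<partial>R x \<partial>\<mu>) = (\<integral>\<^sup>+x. f x \<partial>\<mu>)"
  using nn_integral_bind[OF _ kernel_subprob] bind_kernel by simp

lemma koopman_measurable: "f \<in> borel_measurable \<mu> \<Longrightarrow> koopman R f \<in> borel_measurable \<mu>"
  unfolding koopman_def
  by (rule measurable_compose[OF kernel_subprob integral_measurable_subprob_algebra])

lemma AE_integrable_kernel:
  fixes f :: "'a \<Rightarrow> real"
  assumes f: "integrable \<mu> f"
  shows "AE x in \<mu>. integrable (R x) f"
proof -
  have "(\<integral>\<^sup>+x. \<integral>\<^sup>+y. norm (f y) \<partial>R x \<partial>\<mu>) = (\<integral>\<^sup>+x. norm (f x) \<partial>\<mu>)"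
    using f by (intro nn_integral_kernel_invariant) simp
  also have "\<dots> < \<infinity>" using f by (simp add: integrable_iff_bounded)
  moreover have "(\<lambda>x. \<integral>\<^sup>+y. norm (f y) \<partial>R x) \<in> borel_measurable \<mu>"
    using f by (intro measurable_compose[OF kernel_subprob nn_integral_measurable_subprob_algebra]) simp
  ultimately have "AE x in \<mu>. (\<integral>\<^sup>+y. norm (f y) \<partial>R x) \<noteq> \<infinity>"
    by (intro nn_integral_PInf_AE) simp_all
  then show ?thesis
  proof (rule AE_mp[OF _ AE_I2], intro impI)
    fix x assume "x \<in> space \<mu>" "(\<integral>\<^sup>+y. norm (f y) \<partial>R x) \<noteq> \<infinity>"
    then show "integrable (R x) f"
      using f measurable_kernel unfolding integrable_iff_bounded by (auto simp: top.not_eq_extremum)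
  qed
qed

lemma koopman_diff_AE:
  assumes "integrable \<mu> f" "integrable \<mu> g"
  shows "AE x in \<mu>. koopman R (\<lambda>y. f y - g y) x = koopman R f x - koopman R g x"
  using AE_integrable_kernel[OF assms(1)] AE_integrable_kernel[OF assms(2)]
  by eventually_elim (simp add: koopman_def)

lemma nn_integral_koopman_square_le:
  assumes f: "f \<in> borel_measurable \<mu>"
  shows "(\<integral>\<^sup>+x. ennreal ((koopman R f x)\<^sup>2) \<partial>\<mu>) \<le> (\<integral>\<^sup>+x. ennreal ((f x)\<^sup>2) \<partial>\<mu>)"
proof -
  have "ennreal ((koopman R f x)\<^sup>2) \<le> (\<integral>\<^sup>+y. ennreal ((f y)\<^sup>2) \<partial>R x)" if x: "x \<in> space \<mu>" for x
  proof -
    interpret Rx: prob_space "R x" using prob_space_kernel[OF x] .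
    have fx: "f \<in> borel_measurable (R x)" using measurable_kernel[OF f x] .
    have "ennreal \<bar>koopman R f x\<bar> \<le> (\<integral>\<^sup>+y. ennreal \<bar>f y\<bar> * 1 \<partial>R x)"
      using integral_norm_bound_ennreal[of "R x" f]
      by (cases "integrable (R x) f") (simp_all add: koopman_def not_integrable_integral_eq)
    then have "ennreal ((koopman R f x)\<^sup>2) \<le> (\<integral>\<^sup>+y. ennreal \<bar>f y\<bar> * 1 \<partial>R x)\<^sup>2"
      by (metis abs_ge_zero ennreal_power power2_abs power_mono zero_le)
    also have "\<dots> \<le> (\<integral>\<^sup>+y. (ennreal \<bar>f y\<bar>)\<^sup>2 \<partial>R x) * (\<integral>\<^sup>+y. 1\<^sup>2 \<partial>R x)"
      using fx by (intro Cauchy_Schwarz_nn_integral) auto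
    also have "\<dots> = (\<integral>\<^sup>+y. ennreal ((f y)\<^sup>2) \<partial>R x)"
      by (simp add: ennreal_power Rx.emeasure_space_1)
    finally show ?thesis .
  qed
  then have "(\<integral>\<^sup>+x. ennreal ((koopman R f x)\<^sup>2) \<partial>\<mu>) \<le> (\<integral>\<^sup>+x. \<integral>\<^sup>+y. ennreal ((f y)\<^sup>2) \<partial>R x \<partial>\<mu>)"
    by (intro nn_integral_mono) simp
  also have "\<dots> = (\<integral>\<^sup>+x. ennreal ((f x)\<^sup>2) \<partial>\<mu>)"
    using f by (intro nn_integral_kernel_invariant) simp
  finally show ?thesis .
qed

lemma square_integrable_koopman_le:
  assumes f: "square_integrable \<mu> f"
  shows "square_integrable \<mu> (koopman R f)"
    and "(\<integral>x. (koopman R f x)\<^sup>2 \<partial>\<mu>) \<le> (\<integral>x. (f x)\<^sup>2 \<partial>\<mu>)"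
proof -
  have meas: "koopman R f \<in> borel_measurable \<mu>"
    using f koopman_measurable unfolding square_integrable_def by blast
  have fin: "(\<integral>\<^sup>+x. ennreal ((f x)\<^sup>2) \<partial>\<mu>) = ennreal (\<integral>x. (f x)\<^sup>2 \<partial>\<mu>)"
    using f unfolding square_integrable_def by (intro nn_integral_eq_integral) auto
  have le: "(\<integral>\<^sup>+x. ennreal ((koopman R f x)\<^sup>2) \<partial>\<mu>) \<le> ennreal (\<integral>x. (f x)\<^sup>2 \<partial>\<mu>)"
    unfolding fin[symmetric] using f unfolding square_integrable_def
    by (intro nn_integral_koopman_square_le) simp
  show sq: "square_integrable \<mu> (koopman R f)"
    unfolding square_integrable_def integrable_iff_bounded
    using meas le by (auto simp: top.not_eq_extremum intro: le_less_trans)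
  then have "(\<integral>\<^sup>+x. ennreal ((koopman R f x)\<^sup>2) \<partial>\<mu>) = ennreal (\<integral>x. (koopman R f x)\<^sup>2 \<partial>\<mu>)"
    unfolding square_integrable_def by (intro nn_integral_eq_integral) auto
  then show "(\<integral>x. (koopman R f x)\<^sup>2 \<partial>\<mu>) \<le> (\<integral>x. (f x)\<^sup>2 \<partial>\<mu>)"
    using le by (simp add: ennreal_le_iff)
qed

lemma integrable_of_square_integrable: "square_integrable \<mu> f \<Longrightarrow> integrable \<mu> f"
proof -
  interpret prob_space \<mu> by (rule prob_space_mu)
  show "square_integrable \<mu> f \<Longrightarrow> integrable \<mu> f"
    unfolding square_integrable_def using square_integrable_imp_integrable by blast
qed

lemma integral_koopman_diff_square_le:
  assumes f: "square_integrable \<mu> f" and g: "square_integrable \<mu> g"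
  shows "(\<integral>x. (koopman R f x - koopman R g x)\<^sup>2 \<partial>\<mu>) \<le> (\<integral>x. (f x - g x)\<^sup>2 \<partial>\<mu>)"
proof -
  note [measurable] = koopman_measurable
    f[unfolded square_integrable_def, THEN conjunct1] g[unfolded square_integrable_def, THEN conjunct1]
  have "(\<integral>x. (koopman R f x - koopman R g x)\<^sup>2 \<partial>\<mu>) = (\<integral>x. (koopman R (\<lambda>y. f y - g y) x)\<^sup>2 \<partial>\<mu>)"
  proof (rule integral_cong_AE)
    show "(\<lambda>x. (koopman R f x - koopman R g x)\<^sup>2) \<in> borel_measurable \<mu>" by measurable
    show "(\<lambda>x. (koopman R (\<lambda>y. f y - g y) x)\<^sup>2) \<in> borel_measurable \<mu>" by measurable
    show "AE x in \<mu>. (koopman R f x - koopman R g x)\<^sup>2 = (koopman R (\<lambda>y. f y - g y) x)\<^sup>2"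
      using koopman_diff_AE[OF integrable_of_square_integrable[OF f] integrable_of_square_integrable[OF g]]
      by eventually_elim simp
  qed
  also have "\<dots> \<le> (\<integral>x. (f x - g x)\<^sup>2 \<partial>\<mu>)"
    by (rule square_integrable_koopman_le(2)[OF square_integrable_diff[OF f g]])
  finally show ?thesis .
qed

end

section \<open>The kernel mean embedding\<close>

lemma continuous_on_comb_fun:
  assumes k: "continuous_on (X \<times> X) (\<lambda>(x, y). k x y)" and cs: "snd ` set cs \<subseteq> X"
  shows "continuous_on X (comb_fun k cs)"
  using cs
proof (induction cs)
  case Nil
  then show ?case by (simp add: comb_fun_def)
next
  case (Cons c cs)
  obtain a x where c: "c = (a, x)" by force
  have "continuous_on X (\<lambda>y. (\<lambda>(x, y). k x y) (x, y))"
    using Cons.prems c by (intro continuous_on_compose2[OF k]) (auto intro!: continuous_intros)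
  then have "continuous_on X (\<lambda>y. a * k x y + comb_fun k cs y)"
    using Cons by (auto intro!: continuous_intros)
  then show ?case by (simp add: comb_fun_def c)
qed

locale kernel_mean_embedding = rkhs_kernel X k for X :: "'a::topological_space set" and k +
  fixes \<mu> :: "'a measure"
  assumes prob_space_mu: "prob_space \<mu>"
    and sets_mu: "sets \<mu> = sets (restrict_space borel X)"
    and diag_square_integrable: "square_integrable \<mu> (\<lambda>x. k x x)"
begin

lemma space_mu: "space \<mu> = X"
  using sets_eq_imp_space_eq[OF sets_mu] by (simp add: space_restrict_space)

lemma kernel_continuous: "continuous_on (X \<times> X) (\<lambda>(x, y). k x y)"
  using pd unfolding pd_kernel_def by blast

lemma continuous_on_measurable: "continuous_on X g \<Longrightarrow> g \<in> borel_measurable \<mu>"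
  using borel_measurable_continuous_on_restrict measurable_cong_sets[OF sets_mu refl] by blast

lemma kernel_measurable:
  assumes y: "y \<in> X"
  shows "(\<lambda>x. k x y) \<in> borel_measurable \<mu>"
proof -
  have "continuous_on X (\<lambda>x. (\<lambda>(x, y). k x y) (x, y))"
    using y by (intro continuous_on_compose2[OF kernel_continuous]) (auto intro!: continuous_intros)
  then show ?thesis by (intro continuous_on_measurable) simp
qed

lemma rkhs_measurable:
  assumes "f \<in> rkhs X k"
  shows "f \<in> borel_measurable \<mu>"
proof -
  obtain F where F: "rkhs_approx X k F f" using assms unfolding rkhs_def by auto
  show ?thesis
  proof (rule borel_measurable_LIMSEQ_real)
    show "(\<lambda>n. comb_fun k (F n) x) \<longlonglongrightarrow> f x" if "x \<in> space \<mu>" for x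
      using rkhs_approx_tendsto[OF F] that space_mu by simp
    show "comb_fun k (F n) \<in> borel_measurable \<mu>" for n
      using rkhs_approx_supp[OF F] by (intro continuous_on_measurable continuous_on_comb_fun[OF kernel_continuous])
  qed
qed

lemma integrable_diag: "integrable \<mu> (\<lambda>x. k x x)"
proof -
  interpret prob_space \<mu> by (rule prob_space_mu)
  show ?thesis
    using square_integrable_imp_integrable diag_square_integrable unfolding square_integrable_def by blast
qed

lemma square_integrable_diag_sqrt:
  shows "square_integrable \<mu> (\<lambda>x. sqrt (k x x))"
    and "(\<integral>x. (sqrt (k x x))\<^sup>2 \<partial>\<mu>) = (\<integral>x. k x x \<partial>\<mu>)"
proof -
  have eq: "(\<integral>x. (sqrt (k x x))\<^sup>2 \<partial>\<mu>) = (\<integral>x. k x x \<partial>\<mu>)"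
    using kernel_diag_nonneg space_mu by (intro Bochner_Integration.integral_cong) simp_all
  have "integrable \<mu> (\<lambda>x. (sqrt (k x x))\<^sup>2) \<longleftrightarrow> integrable \<mu> (\<lambda>x. k x x)"
    using kernel_diag_nonneg space_mu by (intro Bochner_Integration.integrable_cong) simp_all
  then have "integrable \<mu> (\<lambda>x. (sqrt (k x x))\<^sup>2)" using integrable_diag by simp
  then show "square_integrable \<mu> (\<lambda>x. sqrt (k x x))"
    using measurable_compose[OF _ borel_measurable_sqrt] diag_square_integrable
    unfolding square_integrable_def by blast
  show "(\<integral>x. (sqrt (k x x))\<^sup>2 \<partial>\<mu>) = (\<integral>x. k x x \<partial>\<mu>)" by (rule eq)
qed

lemma abs_mult_kernel_le:
  assumes "x \<in> X" "y \<in> X"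
  shows "\<bar>c * k x y\<bar> \<le> \<bar>c * sqrt (k x x)\<bar> * sqrt (k y y)"
proof -
  have "\<bar>c * k x y\<bar> \<le> \<bar>c\<bar> * (sqrt (k x x) * sqrt (k y y))"
    unfolding abs_mult using kernel_abs_le[OF assms] by (rule mult_left_mono) simp
  then show ?thesis using kernel_diag_nonneg[OF assms(1)] by (simp add: abs_mult mult.assoc)
qed

lemma kme_integrable:
  assumes g: "square_integrable \<mu> g" and y: "y \<in> X"
  shows "integrable \<mu> (\<lambda>x. g x * k x y)"
proof (rule Bochner_Integration.integrable_bound)
  show "integrable \<mu> (\<lambda>x. \<bar>g x * sqrt (k x x)\<bar> * sqrt (k y y))"
    using integrable_mult_square_integrable[OF g square_integrable_diag_sqrt(1)] by simp
  show "(\<lambda>x. g x * k x y) \<in> borel_measurable \<mu>"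
    using g kernel_measurable[OF y] unfolding square_integrable_def by (intro borel_measurable_times) simp_all
  show "AE x in \<mu>. norm (g x * k x y) \<le> norm (\<bar>g x * sqrt (k x x)\<bar> * sqrt (k y y))"
    using abs_mult_kernel_le[OF _ y] space_mu kernel_diag_nonneg[OF y] by (intro AE_I2) simp
qed

lemma kme_abs_le:
  assumes g: "square_integrable \<mu> g" and y: "y \<in> X"
  shows "\<bar>kme \<mu> k g y\<bar> \<le> sqrt (k y y) * sqrt (\<integral>x. k x x \<partial>\<mu>) * sqrt (\<integral>x. (g x)\<^sup>2 \<partial>\<mu>)"
proof -
  have "\<bar>kme \<mu> k g y\<bar> \<le> (\<integral>x. \<bar>g x * k x y\<bar> \<partial>\<mu>)"
    unfolding kme_def by (rule integral_abs_bound)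
  also have "\<dots> \<le> (\<integral>x. \<bar>g x * sqrt (k x x)\<bar> * sqrt (k y y) \<partial>\<mu>)"
    using kme_integrable[OF g y] integrable_mult_square_integrable[OF g square_integrable_diag_sqrt(1)]
      abs_mult_kernel_le[OF _ y] space_mu
    by (intro integral_mono) simp_all
  also have "\<dots> = sqrt (k y y) * (\<integral>x. \<bar>g x * sqrt (k x x)\<bar> \<partial>\<mu>)" by simp
  also have "\<dots> \<le> sqrt (k y y) * (sqrt (\<integral>x. (g x)\<^sup>2 \<partial>\<mu>) * sqrt (\<integral>x. k x x \<partial>\<mu>))"
    using Cauchy_Schwarz_integral[OF g square_integrable_diag_sqrt(1)] square_integrable_diag_sqrt(2)
      kernel_diag_nonneg[OF y]
    by (intro mult_left_mono) simp_all
  finally show ?thesis by (simp add: ac_simps)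
qed

lemma kme_diff:
  assumes "square_integrable \<mu> g" "square_integrable \<mu> h" "y \<in> X"
  shows "kme \<mu> k (\<lambda>x. g x - h x) y = kme \<mu> k g y - kme \<mu> k h y"
  unfolding kme_def using kme_integrable[OF assms(1,3)] kme_integrable[OF assms(2,3)]
  by (simp add: left_diff_distrib)

lemma kme_cong_AE:
  assumes "g \<in> borel_measurable \<mu>" "h \<in> borel_measurable \<mu>" "AE x in \<mu>. g x = h x" "y \<in> X"
  shows "kme \<mu> k g y = kme \<mu> k h y"
  unfolding kme_def using assms kernel_measurable[OF assms(4)]
  by (intro integral_cong_AE) auto

lemma kme_tendsto:
  assumes gs: "\<And>n. square_integrable \<mu> (gs n)" and g: "square_integrable \<mu> g"
    and L2: "(\<lambda>n. \<integral>x. (gs n x - g x)\<^sup>2 \<partial>\<mu>) \<longlonglongrightarrow> 0" and y: "y \<in> X"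
  shows "(\<lambda>n. kme \<mu> k (gs n) y) \<longlonglongrightarrow> kme \<mu> k g y"
proof (rule LIM_zero_cancel, rule Lim_null_comparison)
  define C where "C = sqrt (k y y) * sqrt (\<integral>x. k x x \<partial>\<mu>)"
  show "\<forall>\<^sub>F n in sequentially. norm (kme \<mu> k (gs n) y - kme \<mu> k g y) \<le> C * sqrt (\<integral>x. (gs n x - g x)\<^sup>2 \<partial>\<mu>)"
    using kme_abs_le[OF square_integrable_diff[OF gs g] y] kme_diff[OF gs g y]
    by (simp add: C_def)
  show "(\<lambda>n. C * sqrt (\<integral>x. (gs n x - g x)\<^sup>2 \<partial>\<mu>)) \<longlonglongrightarrow> 0"
    using tendsto_mult_right_zero[OF tendsto_real_sqrt[OF L2, simplified]] by simp
qed

lemma rkhs_square_integrable: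
  assumes f: "f \<in> rkhs X k"
  shows "square_integrable \<mu> f"
    and "(\<integral>x. (f x)\<^sup>2 \<partial>\<mu>) \<le> (rkhs_norm X k f)\<^sup>2 * (\<integral>x. k x x \<partial>\<mu>)"
proof -
  have bound: "(f x)\<^sup>2 \<le> (rkhs_norm X k f)\<^sup>2 * k x x" if "x \<in> space \<mu>" for x
  proof -
    have "\<bar>f x\<bar>\<^sup>2 \<le> (rkhs_norm X k f * sqrt (k x x))\<^sup>2"
      using rkhs_abs_le[OF f] that space_mu by (intro power_mono) simp_all
    then show ?thesis using kernel_diag_nonneg that space_mu by (simp add: power_mult_distrib)
  qed
  have int: "integrable \<mu> (\<lambda>x. (f x)\<^sup>2)"
  proof (rule Bochner_Integration.integrable_bound)
    show "integrable \<mu> (\<lambda>x. (rkhs_norm X k f)\<^sup>2 * k x x)" using integrable_diag by simp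
    show "(\<lambda>x. (f x)\<^sup>2) \<in> borel_measurable \<mu>" using rkhs_measurable[OF f] by simp
    show "AE x in \<mu>. norm ((f x)\<^sup>2) \<le> norm ((rkhs_norm X k f)\<^sup>2 * k x x)"
      using bound kernel_diag_nonneg space_mu by (intro AE_I2) (simp add: abs_mult)
  qed
  then show "square_integrable \<mu> f" using rkhs_measurable[OF f] unfolding square_integrable_def by simp
  have "(\<integral>x. (f x)\<^sup>2 \<partial>\<mu>) \<le> (\<integral>x. (rkhs_norm X k f)\<^sup>2 * k x x \<partial>\<mu>)"
    using int integrable_diag bound by (intro integral_mono) simp_all
  then show "(\<integral>x. (f x)\<^sup>2 \<partial>\<mu>) \<le> (rkhs_norm X k f)\<^sup>2 * (\<integral>x. k x x \<partial>\<mu>)" by simp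
qed

lemma rkhs_tendsto_L2:
  assumes fs: "\<And>n. fs n \<in> rkhs X k" and f: "f \<in> rkhs X k"
    and lim: "(\<lambda>n. rkhs_norm X k (\<lambda>x. fs n x - f x)) \<longlonglongrightarrow> 0"
  shows "(\<lambda>n. \<integral>x. (fs n x - f x)\<^sup>2 \<partial>\<mu>) \<longlonglongrightarrow> 0"
proof (rule Lim_null_comparison)
  show "\<forall>\<^sub>F n in sequentially. norm (\<integral>x. (fs n x - f x)\<^sup>2 \<partial>\<mu>)
      \<le> (rkhs_norm X k (\<lambda>x. fs n x - f x))\<^sup>2 * (\<integral>x. k x x \<partial>\<mu>)"
    using rkhs_square_integrable(2)[OF rkhs_diff[OF fs f]] by simp
  show "(\<lambda>n. (rkhs_norm X k (\<lambda>x. fs n x - f x))\<^sup>2 * (\<integral>x. k x x \<partial>\<mu>)) \<longlonglongrightarrow> 0"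
    using tendsto_mult_left_zero[OF tendsto_mult_zero[OF lim lim]] by (simp add: power2_eq_square)
qed

end

section \<open>The Koopman operator on the RKHS\<close>

locale koopman_rkhs = kernel_mean_embedding X k \<mu> + stationary_markov_kernel \<mu> R
  for X :: "'a::topological_space set" and k \<mu> R +
  assumes kernel_integral_definite: "\<And>\<psi>. square_integrable \<mu> \<psi> \<Longrightarrow>
      (\<integral>x. (\<integral>y. k x y * \<psi> x * \<psi> y \<partial>\<mu>) \<partial>\<mu>) = 0 \<Longrightarrow> (AE x in \<mu>. \<psi> x = 0)"
    and rkhs_AE_zero: "\<And>\<psi>. \<psi> \<in> rkhs X k \<Longrightarrow> (AE x in \<mu>. \<psi> x = 0) \<Longrightarrow> (\<forall>x\<in>X. \<psi> x = 0)"
begin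

text \<open>The double integral in the definiteness hypothesis is the L^2 pairing of g with E g.\<close>
lemma kme_eq_zero_imp_AE_zero:
  assumes g: "square_integrable \<mu> g" and zero: "\<And>y. y \<in> X \<Longrightarrow> kme \<mu> k g y = 0"
  shows "AE x in \<mu>. g x = 0"
proof (rule kernel_integral_definite[OF g])
  have "(\<integral>y. k x y * g x * g y \<partial>\<mu>) = 0" if x: "x \<in> space \<mu>" for x
  proof -
    have "(\<integral>y. k x y * g x * g y \<partial>\<mu>) = (\<integral>y. g x * (g y * k y x) \<partial>\<mu>)"
      using x space_mu by (intro Bochner_Integration.integral_cong) (auto simp: kernel_sym[of x])
    also have "\<dots> = g x * kme \<mu> k g x" by (simp add: kme_def)
    finally show ?thesis using zero x space_mu by simp
  qed
  then have "(\<integral>x. (\<integral>y. k x y * g x * g y \<partial>\<mu>) \<partial>\<mu>) = (\<integral>x. 0 \<partial>\<mu>)"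
    by (intro Bochner_Integration.integral_cong) simp_all
  then show "(\<integral>x. (\<integral>y. k x y * g x * g y \<partial>\<mu>) \<partial>\<mu>) = 0" by simp
qed

lemma koopman_tendsto_L2:
  assumes \<psi>s: "\<And>n. \<psi>s n \<in> rkhs X k" and \<psi>: "\<psi> \<in> rkhs X k"
    and lim: "(\<lambda>n. rkhs_norm X k (\<lambda>x. \<psi>s n x - \<psi> x)) \<longlonglongrightarrow> 0"
  shows "(\<lambda>n. \<integral>x. (koopman R (\<psi>s n) x - koopman R \<psi> x)\<^sup>2 \<partial>\<mu>) \<longlonglongrightarrow> 0"
proof (rule Lim_null_comparison)
  show "\<forall>\<^sub>F n in sequentially. norm (\<integral>x. (koopman R (\<psi>s n) x - koopman R \<psi> x)\<^sup>2 \<partial>\<mu>)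
      \<le> (\<integral>x. (\<psi>s n x - \<psi> x)\<^sup>2 \<partial>\<mu>)"
    using integral_koopman_diff_square_le[OF rkhs_square_integrable(1)[OF \<psi>s] rkhs_square_integrable(1)[OF \<psi>]]
    by simp
  show "(\<lambda>n. \<integral>x. (\<psi>s n x - \<psi> x)\<^sup>2 \<partial>\<mu>) \<longlonglongrightarrow> 0" by (rule rkhs_tendsto_L2[OF \<psi>s \<psi> lim])
qed

lemma koopH_graph_domain:
  "fst ` koopH_graph \<mu> X k R = {\<psi> \<in> rkhs X k. \<exists>h \<in> rkhs X k. AE x in \<mu>. koopman R \<psi> x = h x}"
proof (intro equalityI subsetI)
  fix \<psi> assume "\<psi> \<in> fst ` koopH_graph \<mu> X k R"
  then obtain \<phi> where \<psi>: "\<psi> \<in> rkhs X k" and \<phi>: "\<phi> \<in> rkhs X k"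
    and eq: "\<And>y. y \<in> X \<Longrightarrow> kme \<mu> k \<phi> y = kme \<mu> k (koopman R \<psi>) y"
    unfolding koopH_graph_def by auto
  have sq\<phi>: "square_integrable \<mu> \<phi>" and sqK: "square_integrable \<mu> (koopman R \<psi>)"
    using rkhs_square_integrable(1) square_integrable_koopman_le(1) \<phi> \<psi> by blast+
  have "AE x in \<mu>. \<phi> x - koopman R \<psi> x = 0"
    using square_integrable_diff[OF sq\<phi> sqK] kme_diff[OF sq\<phi> sqK] eq
    by (intro kme_eq_zero_imp_AE_zero) simp_all
  then have "AE x in \<mu>. koopman R \<psi> x = \<phi> x" by auto
  then show "\<psi> \<in> {\<psi> \<in> rkhs X k. \<exists>h \<in> rkhs X k. AE x in \<mu>. koopman R \<psi> x = h x}"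
    using \<psi> \<phi> by auto
next
  fix \<psi> assume "\<psi> \<in> {\<psi> \<in> rkhs X k. \<exists>h \<in> rkhs X k. AE x in \<mu>. koopman R \<psi> x = h x}"
  then obtain h where \<psi>: "\<psi> \<in> rkhs X k" and h: "h \<in> rkhs X k" and AE: "AE x in \<mu>. koopman R \<psi> x = h x"
    by auto
  have "kme \<mu> k h y = kme \<mu> k (koopman R \<psi>) y" if "y \<in> X" for y
    using rkhs_measurable[OF h] koopman_measurable[OF rkhs_measurable[OF \<psi>]] AE that
    by (intro kme_cong_AE) auto
  then have "(\<psi>, h) \<in> koopH_graph \<mu> X k R" unfolding koopH_graph_def using \<psi> h by auto
  then show "\<psi> \<in> fst ` koopH_graph \<mu> X k R" by force
qed

lemma koopH_graph_closed: "rkhs_closed_operator X k (koopH_graph \<mu> X k R)"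
  unfolding rkhs_closed_operator_def
proof (intro conjI allI impI)
  show "koopH_graph \<mu> X k R \<subseteq> rkhs X k \<times> rkhs X k" unfolding koopH_graph_def by auto
next
  fix \<psi> \<phi>1 \<phi>2 assume "(\<psi>, \<phi>1) \<in> koopH_graph \<mu> X k R" "(\<psi>, \<phi>2) \<in> koopH_graph \<mu> X k R"
  then have \<phi>: "\<phi>1 \<in> rkhs X k" "\<phi>2 \<in> rkhs X k"
    and eq: "\<And>y. y \<in> X \<Longrightarrow> kme \<mu> k \<phi>1 y = kme \<mu> k \<phi>2 y"
    unfolding koopH_graph_def by auto
  note sq = rkhs_square_integrable(1)[OF \<phi>(1)] rkhs_square_integrable(1)[OF \<phi>(2)]
  have "AE x in \<mu>. \<phi>1 x - \<phi>2 x = 0"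
    using square_integrable_diff[OF sq] kme_diff[OF sq] eq
    by (intro kme_eq_zero_imp_AE_zero) simp_all
  then have "\<forall>x\<in>X. \<phi>1 x - \<phi>2 x = 0" by (rule rkhs_AE_zero[OF rkhs_diff[OF \<phi>]])
  then show "\<forall>x\<in>X. \<phi>1 x = \<phi>2 x" by simp
next
  fix \<psi>s \<phi>s \<psi> \<phi>
  assume graph: "\<forall>n. (\<psi>s n, \<phi>s n) \<in> koopH_graph \<mu> X k R" and \<psi>: "\<psi> \<in> rkhs X k" and \<phi>: "\<phi> \<in> rkhs X k"
    and lim\<psi>: "(\<lambda>n. rkhs_norm X k (\<lambda>x. \<psi>s n x - \<psi> x)) \<longlonglongrightarrow> 0"
    and lim\<phi>: "(\<lambda>n. rkhs_norm X k (\<lambda>x. \<phi>s n x - \<phi> x)) \<longlonglongrightarrow> 0"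
  have \<psi>s: "\<psi>s n \<in> rkhs X k" and \<phi>s: "\<phi>s n \<in> rkhs X k"
    and eq: "\<And>y. y \<in> X \<Longrightarrow> kme \<mu> k (\<phi>s n) y = kme \<mu> k (koopman R (\<psi>s n)) y" for n
    using graph unfolding koopH_graph_def by auto
  have "kme \<mu> k \<phi> y = kme \<mu> k (koopman R \<psi>) y" if y: "y \<in> X" for y
  proof (rule LIMSEQ_unique)
    show "(\<lambda>n. kme \<mu> k (\<phi>s n) y) \<longlonglongrightarrow> kme \<mu> k \<phi> y"
      by (rule kme_tendsto[OF rkhs_square_integrable(1)[OF \<phi>s] rkhs_square_integrable(1)[OF \<phi>]
            rkhs_tendsto_L2[OF \<phi>s \<phi> lim\<phi>] y])
    show "(\<lambda>n. kme \<mu> k (\<phi>s n) y) \<longlonglongrightarrow> kme \<mu> k (koopman R \<psi>) y"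
      unfolding eq[OF y]
      by (rule kme_tendsto[OF square_integrable_koopman_le(1)[OF rkhs_square_integrable(1)[OF \<psi>s]]
            square_integrable_koopman_le(1)[OF rkhs_square_integrable(1)[OF \<psi>]]
            koopman_tendsto_L2[OF \<psi>s \<psi> lim\<psi>] y])
  qed
  then show "(\<psi>, \<phi>) \<in> koopH_graph \<mu> X k R" unfolding koopH_graph_def using \<psi> \<phi> by auto
qed

end

theorem lemma4p3:
  fixes X :: "'a::euclidean_space set"
    and \<mu> :: "'a measure"
    and \<rho> :: "real \<Rightarrow> 'a \<Rightarrow> 'a measure"
    and k :: "'a \<Rightarrow> 'a \<Rightarrow> real"
    and t :: real
  assumes mu_prob: "prob_space \<mu>"
    and mu_sets: "sets \<mu> = sets (restrict_space borel X)"
    and rho_kernel: "\<And>s. s \<ge> 0 \<Longrightarrow> \<rho> s \<in> \<mu> \<rightarrow>\<^sub>M prob_algebra \<mu>"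
    and mu_invariant: "\<And>s A. s \<ge> 0 \<Longrightarrow> A \<in> sets \<mu> \<Longrightarrow>
                          (\<integral>\<^sup>+ x. emeasure (\<rho> s x) A \<partial>\<mu>) = emeasure \<mu> A"
    and k_pd: "pd_kernel X k"
    and A1: "square_integrable \<mu> (\<lambda>x. k x x)"
    and A2: "\<And>\<psi>. square_integrable \<mu> \<psi> \<Longrightarrow>
               (\<integral>x. (\<integral>y. k x y * \<psi> x * \<psi> y \<partial>\<mu>) \<partial>\<mu>) = 0 \<Longrightarrow> (AE x in \<mu>. \<psi> x = 0)"
    and A3: "\<And>\<psi>. \<psi> \<in> rkhs X k \<Longrightarrow> (AE x in \<mu>. \<psi> x = 0) \<Longrightarrow> (\<forall>x\<in>X. \<psi> x = 0)"
    and t_nonneg: "t \<ge> 0"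
  shows "fst ` koopH_graph \<mu> X k (\<rho> t) =
           {\<psi> \<in> rkhs X k. \<exists>h \<in> rkhs X k. AE x in \<mu>. koopman (\<rho> t) \<psi> x = h x}
         \<and> rkhs_closed_operator X k (koopH_graph \<mu> X k (\<rho> t))"
proof -
  interpret koopman_rkhs X k \<mu> "\<rho> t"
    unfolding koopman_rkhs_def koopman_rkhs_axioms_def kernel_mean_embedding_def
      kernel_mean_embedding_axioms_def stationary_markov_kernel_def rkhs_kernel_def
    using k_pd mu_prob mu_sets A1 rho_kernel[OF t_nonneg] mu_invariant[OF t_nonneg] A2 A3 by blast
  show ?thesis using koopH_graph_domain koopH_graph_closed by blast
qed

end
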